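(* (Craig's and Lyndon's interpolation.) For all formulas $\phi,\psi$ of $\mathbf{PL}(\mathbin{\backslash\!\!/})$: if $\phi\models\psi$, then there is a formula $\theta$ such that $\phi\models\theta$, $\theta\models\psi$, and $\mathsf{P}^i(\theta)\subseteq\mathsf{P}^i(\phi)\cap\mathsf{P}^i(\psi)$ for each $i\in\{+,-\}$.
   Context: Fix a countably infinite set $\mathsf{Prop}$ of propositional variables. Classical formulas are generated by $\alpha ::= p \mid \bot \mid \neg\alpha \mid \alpha\wedge\alpha \mid \alpha\vee\alpha$ with $p\in\mathsf{Prop}$. Formulas of $\mathbf{PL}(\mathbin{\backslash\!\!/})$ are generated by $\phi ::= \alpha \mid \phi\wedge\phi \mid \phi\vee\phi \mid \phi\mathbin{\backslash\!\!/}\phi$ where $\alpha$ is classical. A team with domain $X\subseteq\mathsf{Prop}$ is a set $t\subseteq 2^X$ of valuations. For a team $t$ whose domain contains the variables of the formula: $t\models p$ iff $v(p)=1$ for all $v\in t$; $t\models\bot$ iff $t=\emptyset$; $t\models\neg\alpha$ iff $\{v\}\not\models\alpha$ for all $v\in t$; $t\models\phi\wedge\psi$ iff both hold; $t\models\phi\vee\psi$ iff there are $s,u\subseteq t$ with $t=s\cup u$, $s\models\phi$, $u\models\psi$; $t\models\phi\mathbin{\backslash\!\!/}\psi$ iff $t\models\phi$ or $t\models\psi$. $\phi\models\psi$ means every team satisfying $\phi$ satisfies $\psi$. Polarity: an occurrence of a propositional variable in $\phi$ is positive (negative) if it lies in the scope of an even (odd) number of negations; $\mathsf{P}^+(\phi)$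 ($\mathsf{P}^-(\phi)$) is the set of variables with a positive (negative) occurrence in $\phi$. *)

theory Defs
  imports Main
begin

text \<open>A valuation is a function nat \<Rightarrow> bool; a valuation with domain X
  is represented canonically as a function that is False outside X.\<close>

type_synonym pvar = nat
type_synonym valuation = "pvar \<Rightarrow> bool"
type_synonym team = "valuation set"

datatype cl = CVar pvar | CBot | CNeg cl | CAnd cl cl | COr cl cl

datatype fm = Cl cl | And fm fm | Or fm fm | IOr fm fm

fun cvars :: "cl \<Rightarrow> pvar set" where
  "cvars (CVar p) = {p}"
| "cvars CBot = {}"
| "cvars (CNeg a) = cvars a"
| "cvars (CAnd a b) = cvars a \<union> cvars b"
| "cvars (COr a b) = cvars a \<union> cvars b"

fun vars :: "fm \<Rightarrow> pvar set" where
  "vars (Cl a) = cvars a"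
| "vars (And f g) = vars f \<union> vars g"
| "vars (Or f g) = vars f \<union> vars g"
| "vars (IOr f g) = vars f \<union> vars g"

definition team_on :: "pvar set \<Rightarrow> team \<Rightarrow> bool" where
  "team_on X t \<longleftrightarrow> (\<forall>v\<in>t. \<forall>p. p \<notin> X \<longrightarrow> v p = False)"

fun csat :: "team \<Rightarrow> cl \<Rightarrow> bool" where
  "csat t (CVar p) \<longleftrightarrow> (\<forall>v\<in>t. v p)"
| "csat t CBot \<longleftrightarrow> t = {}"
| "csat t (CNeg a) \<longleftrightarrow> (\<forall>v\<in>t. \<not> csat {v} a)"
| "csat t (CAnd a b) \<longleftrightarrow> csat t a \<and> csat t b"
| "csat t (COr a b) \<longleftrightarrow> (\<exists>s u. s \<subseteq> t \<and> u \<subseteq> t \<and> t = s \<union> u \<and> csat s a \<and> csat u b)"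

fun sat :: "team \<Rightarrow> fm \<Rightarrow> bool" where
  "sat t (Cl a) \<longleftrightarrow> csat t a"
| "sat t (And f g) \<longleftrightarrow> sat t f \<and> sat t g"
| "sat t (Or f g) \<longleftrightarrow> (\<exists>s u. s \<subseteq> t \<and> u \<subseteq> t \<and> t = s \<union> u \<and> sat s f \<and> sat u g)"
| "sat t (IOr f g) \<longleftrightarrow> sat t f \<or> sat t g"

definition entails :: "fm \<Rightarrow> fm \<Rightarrow> bool" where
  "entails f g \<longleftrightarrow>
     (\<forall>X t. vars f \<union> vars g \<subseteq> X \<longrightarrow> team_on X t \<longrightarrow> sat t f \<longrightarrow> sat t g)"

fun cpos :: "cl \<Rightarrow> pvar set" and cneg :: "cl \<Rightarrow> pvar set" where
  "cpos (CVar p) = {p}"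
| "cpos CBot = {}"
| "cpos (CNeg a) = cneg a"
| "cpos (CAnd a b) = cpos a \<union> cpos b"
| "cpos (COr a b) = cpos a \<union> cpos b"
| "cneg (CVar p) = {}"
| "cneg CBot = {}"
| "cneg (CNeg a) = cpos a"
| "cneg (CAnd a b) = cneg a \<union> cneg b"
| "cneg (COr a b) = cneg a \<union> cneg b"

fun pos :: "fm \<Rightarrow> pvar set" where
  "pos (Cl a) = cpos a"
| "pos (And f g) = pos f \<union> pos g"
| "pos (Or f g) = pos f \<union> pos g"
| "pos (IOr f g) = pos f \<union> pos g"

fun neg :: "fm \<Rightarrow> pvar set" where
  "neg (Cl a) = cneg a"
| "neg (And f g) = neg f \<union> neg g"
| "neg (Or f g) = neg f \<union> neg g"
| "neg (IOr f g) = neg f \<union> neg g"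

end

theory Submission
  imports Defs
begin

text \<open>Pushing the intuitionistic disjunction outwards, every formula is equivalent to an
  intuitionistic disjunction of classical formulas using no new polarities. Classical
  formulas are flat: a team satisfies one iff each of its valuations does. Hence if
  \<open>\<phi> \<Turnstile> \<psi>\<close>, testing on the team of all models of a disjunct \<open>\<alpha>\<close> of \<open>\<phi>\<close> shows that \<open>\<alpha>\<close>
  classically entails some disjunct \<open>\<beta>\<close> of \<open>\<psi>\<close>. The classical Lyndon interpolants of these
  entailments, joined by the intuitionistic disjunction, form \<open>\<theta>\<close>. For \<open>\<alpha> \<Turnstile> \<beta>\<close> the classical
  interpolant is the disjunction, over the models \<open>v\<close> of \<open>\<alpha>\<close>, of the conjunction of those literals of \<open>v\<close> whose
  variable occurs with the same polarity in \<open>\<alpha>\<close> and \<open>\<beta>\<close>; that it entails \<open>\<beta>\<close> follows from the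
  monotonicity of \<open>\<alpha>\<close> and \<open>\<beta>\<close> in their positive and antitonicity in their negative variables.\<close>

fun holds :: "valuation \<Rightarrow> cl \<Rightarrow> bool" where
  "holds v (CVar p) \<longleftrightarrow> v p"
| "holds v CBot \<longleftrightarrow> False"
| "holds v (CNeg a) \<longleftrightarrow> \<not> holds v a"
| "holds v (CAnd a b) \<longleftrightarrow> holds v a \<and> holds v b"
| "holds v (COr a b) \<longleftrightarrow> holds v a \<or> holds v b"

lemma csat_iff_holds: "csat t a \<longleftrightarrow> (\<forall>v\<in>t. holds v a)"
proof (induction a arbitrary: t)
  case (COr a b)
  show ?case
  proof
    assume "csat t (COr a b)"
    then show "\<forall>v\<in>t. holds v (COr a b)"
      using COr.IH by auto
  next
    assume "\<forall>v\<in>t. holds v (COr a b)"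
    then have "t = {v\<in>t. holds v a} \<union> {v\<in>t. holds v b}"
      by auto
    moreover have "csat {v\<in>t. holds v a} a" "csat {v\<in>t. holds v b} b"
      using COr.IH by auto
    ultimately show "csat t (COr a b)"
      unfolding csat.simps by blast
  qed
qed auto

lemma sat_empty: "sat {} f"
  by (induction f) (auto simp: csat_iff_holds)

lemma holds_cong: "(\<And>p. p \<in> cvars a \<Longrightarrow> v p = w p) \<Longrightarrow> holds v a \<longleftrightarrow> holds w a"
  by (induction a) auto

lemma holds_mono_polarity:
  assumes "\<And>p. p \<in> cpos a \<Longrightarrow> v p \<Longrightarrow> w p"
    and "\<And>p. p \<in> cneg a \<Longrightarrow> w p \<Longrightarrow> v p"
    and "holds v a"
  shows "holds w a"
  using assms
proof (induction a arbitrary: v w)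
  case (CNeg a)
  then show ?case
    by (metis cneg.simps(3) cpos.simps(3) holds.simps(3))
next
  case (CAnd a b)
  then show ?case
    by (metis UnCI cneg.simps(4) cpos.simps(4) holds.simps(4))
next
  case (COr a b)
  then show ?case
    by (metis UnCI cneg.simps(5) cpos.simps(5) holds.simps(5))
qed auto

definition cl_entails :: "cl \<Rightarrow> cl \<Rightarrow> bool" where
  "cl_entails a b \<longleftrightarrow> (\<forall>v. holds v a \<longrightarrow> holds v b)"

lemma csat_cl_entails: "cl_entails a b \<Longrightarrow> csat t a \<Longrightarrow> csat t b"
  by (auto simp: cl_entails_def csat_iff_holds)

lemma finite_polarities: "finite (cpos a) \<and> finite (cneg a)"
  by (induction a) auto

lemma holds_of_shared_literals:
  assumes "cl_entails a b"
    and "holds v a"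
    and shared_pos: "\<And>p. p \<in> cpos a \<inter> cpos b \<Longrightarrow> v p \<Longrightarrow> w p"
    and shared_neg: "\<And>p. p \<in> cneg a \<inter> cneg b \<Longrightarrow> w p \<Longrightarrow> v p"
  shows "holds w b"
proof -
  \<comment> \<open>\<open>u\<close> moves \<open>v\<close> towards \<open>w\<close> except where this could falsify \<open>a\<close>.\<close>
  define u where "u p \<longleftrightarrow> (v p \<and> p \<in> cpos a) \<or> (w p \<and> (v p \<or> p \<notin> cneg a))" for p
  have "holds u a"
    by (rule holds_mono_polarity[OF _ _ \<open>holds v a\<close>]) (auto simp: u_def)
  then have "holds u b"
    using \<open>cl_entails a b\<close> by (simp add: cl_entails_def)
  moreover have "w p" if "p \<in> cpos b" "u p" for p
    using shared_pos that by (auto simp: u_def)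
  moreover have "u p" if "p \<in> cneg b" "w p" for p
    using shared_neg that by (auto simp: u_def)
  ultimately show "holds w b"
    using holds_mono_polarity by blast
qed

fun conj_list :: "cl list \<Rightarrow> cl" where
  "conj_list [] = CNeg CBot"
| "conj_list (a # as) = CAnd a (conj_list as)"

fun disj_list :: "cl list \<Rightarrow> cl" where
  "disj_list [] = CBot"
| "disj_list (a # as) = COr a (disj_list as)"

lemma holds_conj_list: "holds v (conj_list as) \<longleftrightarrow> (\<forall>a\<in>set as. holds v a)"
  by (induction as) auto

lemma holds_disj_list: "holds v (disj_list as) \<longleftrightarrow> (\<exists>a\<in>set as. holds v a)"
  by (induction as) auto

lemma polarities_conj_list:
  "cpos (conj_list as) = \<Union>(cpos ` set as) \<and> cneg (conj_list as) = \<Union>(cneg ` set as)"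
  by (induction as) auto

lemma polarities_disj_list:
  "cpos (disj_list as) = \<Union>(cpos ` set as) \<and> cneg (disj_list as) = \<Union>(cneg ` set as)"
  by (induction as) auto

definition polar_term :: "pvar set \<Rightarrow> pvar set \<Rightarrow> valuation \<Rightarrow> cl" where
  "polar_term P N v = conj_list (map CVar (filter v (sorted_list_of_set P))
     @ map (\<lambda>p. CNeg (CVar p)) (filter (\<lambda>p. \<not> v p) (sorted_list_of_set N)))"

lemma holds_polar_term:
  assumes "finite P" "finite N"
  shows "holds w (polar_term P N v) \<longleftrightarrow> (\<forall>p\<in>P. v p \<longrightarrow> w p) \<and> (\<forall>p\<in>N. w p \<longrightarrow> v p)"
  using assms by (auto simp: polar_term_def holds_conj_list ball_Un)

lemma polarities_polar_term:
  assumes "finite P" "finite N"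
  shows "cpos (polar_term P N v) \<subseteq> P \<and> cneg (polar_term P N v) \<subseteq> N"
  using assms by (auto simp: polar_term_def polarities_conj_list)

lemma finite_range_polar_term:
  assumes "finite P" "finite N"
  shows "finite (range (polar_term P N))"
proof -
  have "polar_term P N v = polar_term P N (\<lambda>p. p \<in> {p \<in> P \<union> N. v p})" for v
    unfolding polar_term_def using assms
    by (intro arg_cong[where f = conj_list] arg_cong2[where f = append] arg_cong[where f = "map _"]
        filter_cong) auto
  then have "range (polar_term P N) \<subseteq> (\<lambda>S. polar_term P N (\<lambda>p. p \<in> S)) ` Pow (P \<union> N)"
    by blast
  then show ?thesis
    using assms by (meson finite_Pow_iff finite_UnI finite_imageI finite_subset)
qed

lemma classical_lyndon_interpolation:
  assumes "cl_entails a b"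
  obtains g where "cl_entails a g" "cl_entails g b"
    "cpos g \<subseteq> cpos a \<inter> cpos b" "cneg g \<subseteq> cneg a \<inter> cneg b"
proof -
  define P where "P = cpos a \<inter> cpos b"
  define N where "N = cneg a \<inter> cneg b"
  have fin: "finite P" "finite N"
    using finite_polarities[of a] by (auto simp: P_def N_def)
  have "finite (polar_term P N ` {v. holds v a})"
    by (rule finite_subset[OF _ finite_range_polar_term[OF fin]]) blast
  then obtain gs where gs: "set gs = polar_term P N ` {v. holds v a}"
    by (metis finite_list)
  show thesis
  proof
    show "cl_entails a (disj_list gs)"
      using gs holds_polar_term[OF fin] by (auto simp: cl_entails_def holds_disj_list)
    show "cl_entails (disj_list gs) b"
      unfolding cl_entails_def
    proof (intro allI impI)
      fix w
      assume w: "holds w (disj_list gs)"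
      obtain v where "holds v a" "holds w (polar_term P N v)"
        using w gs by (auto simp: holds_disj_list)
      then have "\<forall>p\<in>P. v p \<longrightarrow> w p" "\<forall>p\<in>N. w p \<longrightarrow> v p"
        by (simp_all add: holds_polar_term[OF fin])
      then show "holds w b"
        by (intro holds_of_shared_literals[OF \<open>cl_entails a b\<close> \<open>holds v a\<close>])
          (auto simp: P_def N_def)
    qed
    show "cpos (disj_list gs) \<subseteq> cpos a \<inter> cpos b"
      using gs polarities_polar_term[OF fin] unfolding P_def by (simp add: polarities_disj_list) blast
    show "cneg (disj_list gs) \<subseteq> cneg a \<inter> cneg b"
      using gs polarities_polar_term[OF fin] unfolding N_def by (simp add: polarities_disj_list) blast
  qed
qed

fun nf :: "fm \<Rightarrow> cl list" where
  "nf (Cl a) = [a]"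
| "nf (And f g) = [CAnd a b. a \<leftarrow> nf f, b \<leftarrow> nf g]"
| "nf (Or f g) = [COr a b. a \<leftarrow> nf f, b \<leftarrow> nf g]"
| "nf (IOr f g) = nf f @ nf g"

lemma sat_iff_nf: "sat t f \<longleftrightarrow> (\<exists>a\<in>set (nf f). csat t a)"
proof (induction f arbitrary: t)
  case (Or f g)
  show ?case
  proof
    assume "sat t (Or f g)"
    then obtain s u a b where "t = s \<union> u" "a \<in> set (nf f)" "csat s a" "b \<in> set (nf g)" "csat u b"
      using Or.IH by auto
    then show "\<exists>c\<in>set (nf (Or f g)). csat t c"
      by (auto simp: csat_iff_holds)
  next
    assume "\<exists>c\<in>set (nf (Or f g)). csat t c"
    then show "sat t (Or f g)"
      using Or.IH by fastforce
  qed
qed auto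

lemma cpos_nf_subset: "a \<in> set (nf f) \<Longrightarrow> cpos a \<subseteq> pos f"
  by (induction f arbitrary: a) fastforce+

lemma cneg_nf_subset: "a \<in> set (nf f) \<Longrightarrow> cneg a \<subseteq> neg f"
  by (induction f arbitrary: a) fastforce+

lemma cvars_nf_subset: "a \<in> set (nf f) \<Longrightarrow> cvars a \<subseteq> vars f"
  by (induction f arbitrary: a) fastforce+

lemma nf_disjunct_entails_nf_disjunct:
  assumes "entails \<phi> \<psi>" and a: "a \<in> set (nf \<phi>)"
  obtains b where "b \<in> set (nf \<psi>)" "cl_entails a b"
proof -
  define X where "X = vars \<phi> \<union> vars \<psi>"
  define restrict where "restrict v p \<longleftrightarrow> p \<in> X \<and> v p" for v :: valuation and p
  define T where "T = restrict ` {v. holds v a}"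
  have restrict_cong: "holds (restrict v) c \<longleftrightarrow> holds v c" if "cvars c \<subseteq> X" for v c
    using that by (intro holds_cong) (auto simp: restrict_def)
  have "cvars a \<subseteq> X"
    using cvars_nf_subset[OF a] by (auto simp: X_def)
  then have "csat T a"
    by (auto simp: T_def csat_iff_holds restrict_cong)
  then have "sat T \<phi>"
    using a sat_iff_nf by blast
  moreover have "team_on X T"
    by (auto simp: team_on_def T_def restrict_def)
  ultimately have "sat T \<psi>"
    using assms(1) by (auto simp: entails_def X_def)
  then obtain b where b: "b \<in> set (nf \<psi>)" "csat T b"
    by (auto simp: sat_iff_nf)
  have "cvars b \<subseteq> X"
    using cvars_nf_subset[OF b(1)] by (auto simp: X_def)
  have "cl_entails a b"
    unfolding cl_entails_def
  proof (intro allI impI)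
    fix v
    assume "holds v a"
    then have "restrict v \<in> T"
      by (auto simp: T_def)
    then have "holds (restrict v) b"
      using b(2) csat_iff_holds by blast
    then show "holds v b"
      using restrict_cong[OF \<open>cvars b \<subseteq> X\<close>] by blast
  qed
  then show thesis
    using that b(1) by blast
qed

lemma nf_disjunct_interpolant:
  assumes "entails \<phi> \<psi>" and a: "a \<in> set (nf \<phi>)"
  obtains g b where "cl_entails a g" "b \<in> set (nf \<psi>)" "cl_entails g b"
    "cpos g \<subseteq> pos \<phi> \<inter> pos \<psi>" "cneg g \<subseteq> neg \<phi> \<inter> neg \<psi>"
proof -
  obtain b where b: "b \<in> set (nf \<psi>)" "cl_entails a b"
    using nf_disjunct_entails_nf_disjunct[OF assms] by blast
  obtain g where "cl_entails a g" "cl_entails g b"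
    and "cpos g \<subseteq> cpos a \<inter> cpos b" "cneg g \<subseteq> cneg a \<inter> cneg b"
    using classical_lyndon_interpolation[OF b(2)] by blast
  moreover from this have "cpos g \<subseteq> pos \<phi> \<inter> pos \<psi>" "cneg g \<subseteq> neg \<phi> \<inter> neg \<psi>"
    using cpos_nf_subset[OF a] cneg_nf_subset[OF a] cpos_nf_subset[OF b(1)] cneg_nf_subset[OF b(1)]
    by auto
  ultimately show thesis
    using that b(1) by blast
qed

fun big_ior :: "cl list \<Rightarrow> fm" where
  "big_ior [] = Cl CBot"
| "big_ior (a # as) = IOr (Cl a) (big_ior as)"

lemma sat_big_ior: "sat t (big_ior as) \<longleftrightarrow> t = {} \<or> (\<exists>a\<in>set as. csat t a)"
  by (induction as) auto

lemma polarities_big_ior: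
  "pos (big_ior as) = \<Union>(cpos ` set as) \<and> neg (big_ior as) = \<Union>(cneg ` set as)"
  by (induction as) auto

lemma entails_big_ior_interpolants:
  assumes "\<And>a. a \<in> set (nf \<phi>) \<Longrightarrow> cl_entails a (G a)"
    and "\<And>a. a \<in> set (nf \<phi>) \<Longrightarrow> \<exists>b\<in>set (nf \<psi>). cl_entails (G a) b"
  shows "entails \<phi> (big_ior (map G (nf \<phi>)))" "entails (big_ior (map G (nf \<phi>))) \<psi>"
proof -
  have "sat t (big_ior (map G (nf \<phi>)))" if "sat t \<phi>" for t
  proof -
    obtain a where "a \<in> set (nf \<phi>)" "csat t a"
      using \<open>sat t \<phi>\<close> sat_iff_nf by blast
    then have "csat t (G a)"
      using assms(1) csat_cl_entails by blast
    then show ?thesis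
      using \<open>a \<in> set (nf \<phi>)\<close> by (auto simp: sat_big_ior)
  qed
  moreover have "sat t \<psi>" if sat_ior: "sat t (big_ior (map G (nf \<phi>)))" for t
  proof (cases "t = {}")
    case False
    then obtain a where "a \<in> set (nf \<phi>)" "csat t (G a)"
      using sat_ior by (auto simp: sat_big_ior)
    then show ?thesis
      using assms(2) csat_cl_entails sat_iff_nf by blast
  qed (simp add: sat_empty)
  ultimately show "entails \<phi> (big_ior (map G (nf \<phi>)))" "entails (big_ior (map G (nf \<phi>))) \<psi>"
    unfolding entails_def by blast+
qed

theorem corollary8p2:
  fixes \<phi> \<psi> :: fm
  assumes "entails \<phi> \<psi>"
  shows "\<exists>\<theta>. entails \<phi> \<theta> \<and> entails \<theta> \<psi> \<and>
           pos \<theta> \<subseteq> pos \<phi> \<inter> pos \<psi> \<and> neg \<theta> \<subseteq> neg \<phi> \<inter> neg \<psi>"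
proof -
  have "\<forall>a\<in>set (nf \<phi>). \<exists>g. cl_entails a g \<and> (\<exists>b\<in>set (nf \<psi>). cl_entails g b)
      \<and> cpos g \<subseteq> pos \<phi> \<inter> pos \<psi> \<and> cneg g \<subseteq> neg \<phi> \<inter> neg \<psi>"
    by (metis nf_disjunct_interpolant[OF assms])
  then obtain G where G: "\<And>a. a \<in> set (nf \<phi>) \<Longrightarrow> cl_entails a (G a)"
    "\<And>a. a \<in> set (nf \<phi>) \<Longrightarrow> \<exists>b\<in>set (nf \<psi>). cl_entails (G a) b"
    "\<And>a. a \<in> set (nf \<phi>) \<Longrightarrow> cpos (G a) \<subseteq> pos \<phi> \<inter> pos \<psi>"
    "\<And>a. a \<in> set (nf \<phi>) \<Longrightarrow> cneg (G a) \<subseteq> neg \<phi> \<inter> neg \<psi>"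
    by metis
  have "pos (big_ior (map G (nf \<phi>))) \<subseteq> pos \<phi> \<inter> pos \<psi>"
    "neg (big_ior (map G (nf \<phi>))) \<subseteq> neg \<phi> \<inter> neg \<psi>"
    using G(3,4) by (simp_all add: polarities_big_ior UN_subset_iff)
  with entails_big_ior_interpolants[OF G(1,2)] show ?thesis
    by (intro exI[of _ "big_ior (map G (nf \<phi>))"]) simp
qed

end
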